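(* Let $\mathcal G=(I,O,\lambda)$ be a synchronous game and let $p(a,b|v,w)=\langle h_{v,a},k_{w,b}\rangle$ be a perfect vect-strategy for $\mathcal G$, with vectors $h_{v,a},k_{w,b}$ as in the definition of a vector correlation. Then $h_{v,a}=k_{v,a}$ for all $v\in I$, $a\in O$.
   Context: A synchronous game $\mathcal G=(I,O,\lambda)$ consists of finite sets $I,O$ and $\lambda:I\times I\times O\times O\to\{0,1\}$ with $\lambda(v,v,a,b)=1$ if $a=b$ and $0$ if $a\ne b$. A strategy $p(a,b|v,w)$ is perfect if $\lambda(v,w,a,b)=0\Rightarrow p(a,b|v,w)=0$. A vector correlation (vect-strategy) is one of the form $p(a,b|v,w)=\langle h_{v,a},k_{w,b}\rangle$ where $h_{v,a},k_{w,b}$ ($v,w\in I$, $a,b\in O$) are vectors in a Hilbert space such that for each $v$ the vectors $\{h_{v,a}\}_{a\in O}$ are mutually orthogonal and the vectors $\{k_{v,b}\}_{b\in O}$ are mutually orthogonal, there is a unit vector $\eta$ with $\sum_ah_{v,a}=\eta=\sum_bk_{w,b}$ for all $v,w$, and $\langle h_{v,a},k_{w,b}\rangle\ge0$ for all $v,w,a,b$. *)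

theory Defs
  imports Complex_Main
begin

definition synchronous_game ::
  "'i set \<Rightarrow> 'o set \<Rightarrow> ('i \<Rightarrow> 'i \<Rightarrow> 'o \<Rightarrow> 'o \<Rightarrow> nat) \<Rightarrow> bool" where
  "synchronous_game I Out lam \<longleftrightarrow>
     finite I \<and> finite Out \<and>
     (\<forall>v\<in>I. \<forall>w\<in>I. \<forall>a\<in>Out. \<forall>b\<in>Out. lam v w a b \<in> {0, 1}) \<and>
     (\<forall>v\<in>I. \<forall>a\<in>Out. \<forall>b\<in>Out. lam v v a b = (if a = b then 1 else 0))"

definition perfect_strategy ::
  "'i set \<Rightarrow> 'o set \<Rightarrow> ('i \<Rightarrow> 'i \<Rightarrow> 'o \<Rightarrow> 'o \<Rightarrow> nat)
     \<Rightarrow> ('o \<Rightarrow> 'o \<Rightarrow> 'i \<Rightarrow> 'i \<Rightarrow> complex) \<Rightarrow> bool" where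
  "perfect_strategy I Out lam p \<longleftrightarrow>
     (\<forall>v\<in>I. \<forall>w\<in>I. \<forall>a\<in>Out. \<forall>b\<in>Out. lam v w a b = 0 \<longrightarrow> p a b v w = 0)"

definition ip_norm :: "('h \<Rightarrow> 'h \<Rightarrow> complex) \<Rightarrow> 'h \<Rightarrow> real" where
  "ip_norm ip x = sqrt (Re (ip x x))"

definition complex_hilbert_space ::
  "(complex \<Rightarrow> 'h::ab_group_add \<Rightarrow> 'h) \<Rightarrow> ('h \<Rightarrow> 'h \<Rightarrow> complex) \<Rightarrow> bool" where
  "complex_hilbert_space sm ip \<longleftrightarrow>
     (\<forall>x. sm 1 x = x) \<and>
     (\<forall>a b x. sm (a * b) x = sm a (sm b x)) \<and>
     (\<forall>a x y. sm a (x + y) = sm a x + sm a y) \<and>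
     (\<forall>a b x. sm (a + b) x = sm a x + sm b x) \<and>
     (\<forall>x y z. ip (x + y) z = ip x z + ip y z) \<and>
     (\<forall>c x y. ip (sm c x) y = c * ip x y) \<and>
     (\<forall>x y. ip y x = cnj (ip x y)) \<and>
     (\<forall>x. Im (ip x x) = 0 \<and> Re (ip x x) \<ge> 0) \<and>
     (\<forall>x. ip x x = 0 \<longrightarrow> x = 0) \<and>
     (\<forall>X :: nat \<Rightarrow> 'h.
        (\<forall>e>0. \<exists>N. \<forall>m\<ge>N. \<forall>n\<ge>N. ip_norm ip (X m - X n) < e) \<longrightarrow>
        (\<exists>L. \<forall>e>0. \<exists>N. \<forall>n\<ge>N. ip_norm ip (X n - L) < e))"

definition vect_correlation ::
  "('h::ab_group_add \<Rightarrow> 'h \<Rightarrow> complex) \<Rightarrow> 'i set \<Rightarrow> 'o set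
     \<Rightarrow> ('i \<Rightarrow> 'o \<Rightarrow> 'h) \<Rightarrow> ('i \<Rightarrow> 'o \<Rightarrow> 'h) \<Rightarrow> bool" where
  "vect_correlation ip I Out h k \<longleftrightarrow>
     (\<forall>v\<in>I. \<forall>a\<in>Out. \<forall>a'\<in>Out. a \<noteq> a' \<longrightarrow> ip (h v a) (h v a') = 0) \<and>
     (\<forall>v\<in>I. \<forall>b\<in>Out. \<forall>b'\<in>Out. b \<noteq> b' \<longrightarrow> ip (k v b) (k v b') = 0) \<and>
     (\<exists>eta. ip eta eta = 1 \<and>
        (\<forall>v\<in>I. (\<Sum>a\<in>Out. h v a) = eta) \<and> (\<forall>w\<in>I. (\<Sum>b\<in>Out. k w b) = eta)) \<and>
     (\<forall>v\<in>I. \<forall>w\<in>I. \<forall>a\<in>Out. \<forall>b\<in>Out.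
        Im (ip (h v a) (k w b)) = 0 \<and> Re (ip (h v a) (k w b)) \<ge> 0)"

end

theory Submission
  imports Defs
begin

text \<open>On the diagonal questions \<open>(v, v)\<close> perfection gives \<open>\<langle>h v a, k v b\<rangle> = 0\<close> for \<open>a \<noteq> b\<close>.
  Expanding \<open>\<eta>\<close> as \<open>\<Sum>b. h v b\<close> or as \<open>\<Sum>b. k v b\<close> and using the orthogonality within each
  family, \<open>\<langle>h v a, h v a\<rangle> = \<langle>h v a, \<eta>\<rangle> = \<langle>h v a, k v a\<rangle>\<close> and
  \<open>\<langle>k v a, k v a\<rangle> = \<langle>\<eta>, k v a\<rangle> = \<langle>h v a, k v a\<rangle>\<close>. This common value is real,
  so \<open>\<langle>h v a - k v a, h v a - k v a\<rangle> = 0\<close>.\<close>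

lemma perfect_strategy_diag_zero:
  assumes "synchronous_game I Out lam" and "perfect_strategy I Out lam p"
    and "v \<in> I" and "a \<in> Out" and "b \<in> Out" and "a \<noteq> b"
  shows "p a b v v = 0"
  using assms unfolding synchronous_game_def perfect_strategy_def by auto

locale hermitian_form =
  fixes ip :: "'h::ab_group_add \<Rightarrow> 'h \<Rightarrow> complex"
  assumes ip_add_left: "ip (x + y) z = ip x z + ip y z"
    and ip_cnj_sym: "ip y x = cnj (ip x y)"
begin

lemma ip_add_right: "ip z (x + y) = ip z x + ip z y"
proof -
  have "ip z (x + y) = cnj (ip x z + ip y z)"
    by (simp only: ip_cnj_sym[of z "x + y"] ip_add_left)
  then show ?thesis by (simp add: ip_cnj_sym[of x z] ip_cnj_sym[of y z])
qed

lemma ip_diff_left: "ip (x - y) z = ip x z - ip y z"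
  using ip_add_left[of "x - y" y z] by (simp add: eq_diff_eq)

lemma ip_diff_right: "ip z (x - y) = ip z x - ip z y"
  using ip_add_right[of z "x - y" y] by (simp add: eq_diff_eq)

lemma ip_zero_left: "ip 0 z = 0"
  using ip_diff_left[of 0 0 z] by simp

lemma ip_sum_left: "ip (sum f A) z = (\<Sum>a\<in>A. ip (f a) z)"
proof (induction A rule: infinite_finite_induct)
  case (infinite A)
  then show ?case by (simp add: ip_zero_left)
next
  case empty
  then show ?case by (simp add: ip_zero_left)
next
  case (insert x F)
  then show ?case by (simp add: ip_add_left)
qed

lemma ip_sum_left_orthogonal:
  assumes "finite A" and "a \<in> A" and "\<And>b. b \<in> A \<Longrightarrow> b \<noteq> a \<Longrightarrow> ip (f b) z = 0"
  shows "ip (sum f A) z = ip (f a) z"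
  using assms by (simp add: ip_add_left ip_sum_left sum.remove)

lemma ip_sum_right_orthogonal:
  assumes "finite A" and "a \<in> A" and "\<And>b. b \<in> A \<Longrightarrow> b \<noteq> a \<Longrightarrow> ip z (f b) = 0"
  shows "ip z (sum f A) = ip z (f a)"
proof -
  have "ip z (sum f A) = cnj (ip (sum f A) z)" by (rule ip_cnj_sym)
  also have "\<dots> = cnj (ip (f a) z)"
  proof -
    have "ip (f b) z = 0" if "b \<in> A" "b \<noteq> a" for b
      using assms(3)[OF that] ip_cnj_sym[of z "f b"] by simp
    then show ?thesis using ip_sum_left_orthogonal[OF assms(1,2)] by simp
  qed
  also have "\<dots> = ip z (f a)" by (rule ip_cnj_sym[symmetric])
  finally show ?thesis .
qed

lemma eq_if_inner_products_eq:
  assumes definite: "\<And>x. ip x x = 0 \<Longrightarrow> x = 0"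
    and "ip x x = c" and "ip y y = c" and "ip x y = c" and "Im c = 0"
  shows "x = y"
proof -
  have "ip y x = c"
    using assms(4,5) ip_cnj_sym[of x y] by (simp add: complex_eq_iff)
  then have "ip (x - y) (x - y) = 0"
    using assms(2-4) by (simp add: ip_diff_left ip_diff_right)
  then have "x - y = 0" by (rule definite)
  then show ?thesis by simp
qed

end

lemma complex_hilbert_space_hermitian_form:
  assumes "complex_hilbert_space sm ip"
  shows "hermitian_form ip"
proof
  fix x y z
  show "ip (x + y) z = ip x z + ip y z" and "ip y x = cnj (ip x y)"
    using assms unfolding complex_hilbert_space_def by blast+
qed

theorem mainTheorem9:
  fixes I :: "'i set" and Out :: "'o set" and lam :: "'i \<Rightarrow> 'i \<Rightarrow> 'o \<Rightarrow> 'o \<Rightarrow> nat"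
    and sm :: "complex \<Rightarrow> 'h::ab_group_add \<Rightarrow> 'h" and ip :: "'h \<Rightarrow> 'h \<Rightarrow> complex"
    and h k :: "'i \<Rightarrow> 'o \<Rightarrow> 'h"
  assumes "synchronous_game I Out lam"
    and "complex_hilbert_space sm ip"
    and "vect_correlation ip I Out h k"
    and "perfect_strategy I Out lam (\<lambda>a b v w. ip (h v a) (k w b))"
  shows "\<forall>v\<in>I. \<forall>a\<in>Out. h v a = k v a"
proof (intro ballI)
  fix v a assume v: "v \<in> I" and a: "a \<in> Out"
  interpret hermitian_form ip
    using assms(2) by (rule complex_hilbert_space_hermitian_form)
  have fin: "finite Out" using assms(1) unfolding synchronous_game_def by blast
  have definite: "\<And>x. ip x x = 0 \<Longrightarrow> x = 0"
    using assms(2) unfolding complex_hilbert_space_def by blast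
  have hk: "\<And>b c. b \<in> Out \<Longrightarrow> c \<in> Out \<Longrightarrow> b \<noteq> c \<Longrightarrow> ip (h v b) (k v c) = 0"
    using perfect_strategy_diag_zero[OF assms(1,4) v] by blast
  have hh: "\<And>b c. b \<in> Out \<Longrightarrow> c \<in> Out \<Longrightarrow> b \<noteq> c \<Longrightarrow> ip (h v b) (h v c) = 0"
    using assms(3) v unfolding vect_correlation_def by blast
  have kk: "\<And>b c. b \<in> Out \<Longrightarrow> c \<in> Out \<Longrightarrow> b \<noteq> c \<Longrightarrow> ip (k v b) (k v c) = 0"
    using assms(3) v unfolding vect_correlation_def by blast
  have real: "Im (ip (h v a) (k v a)) = 0"
    using assms(3) v a unfolding vect_correlation_def by blast
  obtain eta where hs: "(\<Sum>b\<in>Out. h v b) = eta" and ks: "(\<Sum>b\<in>Out. k v b) = eta"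
    using assms(3) v unfolding vect_correlation_def by blast
  have "ip (h v a) (h v a) = ip (h v a) eta"
    using ip_sum_right_orthogonal[OF fin a, where f = "h v"] hh a hs by simp
  also have "\<dots> = ip (h v a) (k v a)"
    using ip_sum_right_orthogonal[OF fin a, where f = "k v"] hk a ks by simp
  finally have hva: "ip (h v a) (h v a) = ip (h v a) (k v a)" .
  have "ip (k v a) (k v a) = ip eta (k v a)"
    using ip_sum_left_orthogonal[OF fin a, where f = "k v"] kk a ks by simp
  also have "\<dots> = ip (h v a) (k v a)"
    using ip_sum_left_orthogonal[OF fin a, where f = "h v"] hk a hs by simp
  finally have kva: "ip (k v a) (k v a) = ip (h v a) (k v a)" .
  show "h v a = k v a"
    by (rule eq_if_inner_products_eq[OF definite hva kva refl real])
qed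

end
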